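(* Let $p\ge 10$ and let $s$ be an integer with $1\le s<p/3-1$. Suppose Assumption 1 holds and Assumption 2 holds with some $0\le\delta_s<1$. For $k=1,\dots,s$ let $\lambda_k=\lambda_k(\bar D)$. Then there exists a constant $C_L>0$ depending only on $a_u$ and $a_\ell$ such that $$\inf_{\hat f}\ \sup_{f^*\in\mathcal{F}_{T,s,D}}\mathbb{E}\big[\|\hat f-f^*\|_2^2\big]\ \ge\ C_L\max_{1\le k\le s}\left\{\min\left(\frac{k}{p^2\lambda_k^2},\ \frac{k}{(1+\delta_s)T}\log\frac{p-k-1}{k/2}\right)\right\},$$ where the infimum is over all measurable estimators $\hat f$ of $f^*$ based on $y$ (which may depend on $T$, $A$, $D$).
   Context: Setup: $n,p\ge1$ integers, $T>0$. $D\in\mathbb{R}^{p\times p}$ is an orthonormal matrix with columns $d_1,\dots,d_p$, where $d_1=p^{-1/2}(1,\dots,1)^\top$; $\bar D=[d_2,\dots,d_p]\in\mathbb{R}^{p\times(p-1)}$. For an integer $s\ge1$, $\mathcal{F}_{T,s,D}=\{f\in\mathbb{R}^p_{\ge0}:\ \|f\|_1=1,\ \|\bar D^\top f\|_0\le s\}$, where $\|v\|_0$ is the number of nonzero entries. Given a sensing matrix $A\in\mathbb{R}^{n\times p}$ and $f^*\in\mathcal{F}_{T,s,D}$, the observation is $y=(y_1,\dots,y_n)$ with independent $y_i\sim\mathrm{Poisson}(T(Af^* )_i)$; expectation is over $y$. Assumption 1: there are constants $a_\ell<a_u$ and a matrix $\widetilde A\in\mathbb{R}^{n\times p}$ with all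 entries in $[a_\ell/\sqrt n,a_u/\sqrt n]$ such that $A=\big(\widetilde A+\frac{a_u-2a_\ell}{\sqrt n}\mathbb{1}_{n\times p}\big)/\big(2(a_u-a_\ell)\sqrt n\big)$, with $\mathbb{1}_{n\times p}$ the all-ones matrix. Assumption 2: there is $\delta_s\ge0$ such that $\|\widetilde A D u\|_2^2\le(1+\delta_s)\|u\|_2^2$ for all $u\in\mathbb{R}^p$ with $\|u\|_0\le 2s$. $s$-sparse localization: for a matrix $X$ with $m$ columns and $1\le k\le m$, $\lambda_k(X)=\max\{\|Xv\|_\infty:\ v\in\{-1,0,1\}^{m},\ \|v\|_0=k\}$. Here $\log$ is the natural logarithm. *)

theory Defs
  imports "HOL-Analysis.Analysis" "HOL-Probability.Probability"
begin

text \<open>Matrices are represented as functions nat => nat => real with explicit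
 index bounds (0-based); vectors as nat => real (extensional: zero outside range).\<close>

definition orthonormal_mat :: "nat \<Rightarrow> (nat \<Rightarrow> nat \<Rightarrow> real) \<Rightarrow> bool" where
  "orthonormal_mat p D \<longleftrightarrow>
     (\<forall>i<p. \<forall>j<p. (\<Sum>k<p. D k i * D k j) = (if i = j then 1 else 0))"

definition first_col_const :: "nat \<Rightarrow> (nat \<Rightarrow> nat \<Rightarrow> real) \<Rightarrow> bool" where
  "first_col_const p D \<longleftrightarrow> (\<forall>i<p. D i 0 = 1 / sqrt (real p))"

definition Dbar :: "(nat \<Rightarrow> nat \<Rightarrow> real) \<Rightarrow> nat \<Rightarrow> nat \<Rightarrow> real" where
  "Dbar D i j = D i (j + 1)"

definition FTsD :: "nat \<Rightarrow> nat \<Rightarrow> (nat \<Rightarrow> nat \<Rightarrow> real) \<Rightarrow> (nat \<Rightarrow> real) set" where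
  "FTsD p s D = {f. (\<forall>i. p \<le> i \<longrightarrow> f i = 0) \<and> (\<forall>i<p. 0 \<le> f i) \<and> (\<Sum>i<p. \<bar>f i\<bar>) = 1
       \<and> card {j. j < p - 1 \<and> (\<Sum>i<p. Dbar D i j * f i) \<noteq> 0} \<le> s}"

definition sensA :: "real \<Rightarrow> real \<Rightarrow> nat \<Rightarrow> (nat \<Rightarrow> nat \<Rightarrow> real) \<Rightarrow> nat \<Rightarrow> nat \<Rightarrow> real" where
  "sensA al au n At i j = (At i j + (au - 2 * al) / sqrt (real n)) / (2 * (au - al) * sqrt (real n))"

definition matvec :: "nat \<Rightarrow> (nat \<Rightarrow> nat \<Rightarrow> real) \<Rightarrow> (nat \<Rightarrow> real) \<Rightarrow> nat \<Rightarrow> real" where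
  "matvec m M v i = (\<Sum>j<m. M i j * v j)"

text \<open>Law of y: independent y_i ~ Poisson(T (A f)_i), i < n; y i = 0 for i >= n.\<close>
definition obs_law :: "nat \<Rightarrow> nat \<Rightarrow> real \<Rightarrow> (nat \<Rightarrow> nat \<Rightarrow> real) \<Rightarrow> (nat \<Rightarrow> real) \<Rightarrow> (nat \<Rightarrow> nat) pmf" where
  "obs_law n p T A f = Pi_pmf {..<n} 0 (\<lambda>i. poisson_pmf (T * matvec p A f i))"

definition risk :: "nat \<Rightarrow> nat \<Rightarrow> real \<Rightarrow> (nat \<Rightarrow> nat \<Rightarrow> real) \<Rightarrow> ((nat \<Rightarrow> nat) \<Rightarrow> nat \<Rightarrow> real)
     \<Rightarrow> (nat \<Rightarrow> real) \<Rightarrow> ennreal" where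
  "risk n p T A fhat f = (\<integral>\<^sup>+ y. ennreal (\<Sum>i<p. (fhat y i - f i)\<^sup>2) \<partial>measure_pmf (obs_law n p T A f))"

definition sign_vecs :: "nat \<Rightarrow> nat \<Rightarrow> (nat \<Rightarrow> real) set" where
  "sign_vecs m k = {v. (\<forall>j. m \<le> j \<longrightarrow> v j = 0) \<and> (\<forall>j<m. v j \<in> {-1, 0, 1})
                        \<and> card {j. j < m \<and> v j \<noteq> 0} = k}"

definition lambda_loc :: "nat \<Rightarrow> nat \<Rightarrow> (nat \<Rightarrow> nat \<Rightarrow> real) \<Rightarrow> nat \<Rightarrow> real" where
  "lambda_loc r m X k = Max ((\<lambda>v. Max ((\<lambda>i. \<bar>matvec m X v i\<bar>) ` {..<r})) ` sign_vecs m k)"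

end

theory Submission
  imports Defs
begin

text \<open>
  Fix a sparsity level k with 1 \<le> k \<le> s and split the p - 1 non-constant columns
  d_2, ..., d_p of D into k blocks of m = (p - 1) div k columns each.  For every code
  S choosing one column per block, the hypothesis
      f_S = (1/p) 1 + \<gamma> \<Sigma>_b d_(col b (S b))
  lies in F_{T,s,D}, provided \<gamma> \<lambda>_k \<le> 1/p (this gives nonnegativity).  The argument is
  Assouad-like, block by block:
  (i)  by Bessel's inequality the loss of an estimator is at least \<gamma>^2/2 times the
       number of blocks in which a nearest-column test on its coefficients fails;
  (ii) two hypotheses differing in one block have Poisson laws whose likelihood-ratio
       moment E_P[dP/dQ] = exp(\<Sigma> (a - b)^2/b) is at most m/2 (by Assumption 2), and the
       elementary bound P(X) \<le> u Q(X) + E_P[dP/dQ]/(4u) applied to the m disjoint test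
       regions of a block shows that, on average over codes, each block test fails with
       probability at least 1/4.
  Averaging over codes yields risk \<ge> \<gamma>^2 k/8, and \<gamma>^2 k dominates a constant multiple
  of the k-th term of the stated maximum.
\<close>

lemma exists_ge_average:
  fixes f :: "'a \<Rightarrow> real"
  assumes "finite A" "A \<noteq> {}" "real (card A) * c \<le> (\<Sum>x\<in>A. f x)"
  shows "\<exists>x\<in>A. c \<le> f x"
proof (rule ccontr)
  assume "\<not> (\<exists>x\<in>A. c \<le> f x)"
  then have "(\<Sum>x\<in>A. f x) < (\<Sum>x\<in>A. c)" using assms by (intro sum_strict_mono) auto
  then show False using assms by simp
qed

lemma sum_PiE_split:
  assumes b: "b \<in> K"
  shows "(\<Sum>S\<in>PiE K F. g S) = (\<Sum>\<sigma>\<in>PiE (K - {b}) F. \<Sum>j\<in>F b. g (\<sigma>(b := j)))"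
proof -
  let ?R = "PiE (K - {b}) F"
  have "PiE K F = PiE (insert b (K - {b})) F" using b by (simp add: insert_absorb)
  also have "\<dots> = (\<lambda>(y, g). g(b := y)) ` (F b \<times> ?R)"
    by (rule PiE_insert_eq)
  finally have split: "PiE K F = (\<lambda>(y, g). g(b := y)) ` (F b \<times> ?R)" .
  have inj: "inj_on (\<lambda>(y, g). g(b := y)) (F b \<times> ?R)"
    using inj_combinator[of b "K - {b}" F] by simp
  have "(\<Sum>S\<in>PiE K F. g S) = (\<Sum>(y, h)\<in>F b \<times> ?R. g (h(b := y)))"
    unfolding split by (subst sum.reindex[OF inj]) (simp add: case_prod_beta')
  also have "\<dots> = (\<Sum>j\<in>F b. \<Sum>\<sigma>\<in>?R. g (\<sigma>(b := j)))"
    by (rule sum.cartesian_product[symmetric])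
  also have "\<dots> = (\<Sum>\<sigma>\<in>?R. \<Sum>j\<in>F b. g (\<sigma>(b := j)))"
    by (rule sum.swap)
  finally show ?thesis .
qed

lemma bessel_inequality:
  fixes v :: "'i \<Rightarrow> nat \<Rightarrow> real" and x :: "nat \<Rightarrow> real"
  assumes I: "finite I"
    and orthonormal: "\<And>t t'. t \<in> I \<Longrightarrow> t' \<in> I \<Longrightarrow>
                        (\<Sum>i<p. v t i * v t' i) = (if t = t' then 1 else 0)"
  shows "(\<Sum>t\<in>I. (\<Sum>i<p. v t i * x i)\<^sup>2) \<le> (\<Sum>i<p. (x i)\<^sup>2)"
proof -
  define \<alpha> where "\<alpha> t = (\<Sum>i<p. v t i * x i)" for t
  define z where "z i = (\<Sum>t\<in>I. \<alpha> t * v t i)" for i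
  have xz: "(\<Sum>i<p. x i * z i) = (\<Sum>t\<in>I. (\<alpha> t)\<^sup>2)"
  proof -
    have "(\<Sum>i<p. x i * z i) = (\<Sum>t\<in>I. \<alpha> t * (\<Sum>i<p. v t i * x i))"
      unfolding z_def by (simp add: sum_distrib_left sum_distrib_right sum.swap[of _ I] algebra_simps)
    then show ?thesis by (simp add: \<alpha>_def power2_eq_square)
  qed
  have zz: "(\<Sum>i<p. (z i)\<^sup>2) = (\<Sum>t\<in>I. (\<alpha> t)\<^sup>2)"
  proof -
    have "(\<Sum>i<p. (z i)\<^sup>2) = (\<Sum>t\<in>I. \<Sum>t'\<in>I. \<alpha> t * \<alpha> t' * (\<Sum>i<p. v t i * v t' i))"
      unfolding z_def power2_eq_square
      by (simp add: sum_product algebra_simps sum.swap[of _ "{..<p}"] sum_distrib_left)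
    also have "\<dots> = (\<Sum>t\<in>I. \<Sum>t'\<in>I. \<alpha> t * \<alpha> t' * (if t = t' then 1 else 0))"
      by (intro sum.cong refl) (simp add: orthonormal)
    also have "\<dots> = (\<Sum>t\<in>I. (\<alpha> t)\<^sup>2)" using I by (simp add: power2_eq_square if_distrib cong: if_cong)
    finally show ?thesis .
  qed
  have "0 \<le> (\<Sum>i<p. (x i - z i)\<^sup>2)" by (intro sum_nonneg) auto
  also have "\<dots> = (\<Sum>i<p. (x i)\<^sup>2) - 2 * (\<Sum>i<p. x i * z i) + (\<Sum>i<p. (z i)\<^sup>2)"
    by (simp add: power2_diff sum.distrib sum_subtractf sum_distrib_left algebra_simps)
  finally show ?thesis using xz zz by (simp add: \<alpha>_def)
qed

lemma finite_sign_vecs: "finite (sign_vecs m k)"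
proof -
  have "sign_vecs m k \<subseteq> {f. \<forall>x. (x \<in> {..<m} \<longrightarrow> f x \<in> {-1, 0, 1}) \<and> (x \<notin> {..<m} \<longrightarrow> f x = 0)}"
    unfolding sign_vecs_def by auto
  moreover have "finite {f::nat \<Rightarrow> real. \<forall>x. (x \<in> {..<m} \<longrightarrow> f x \<in> {-1, 0, 1}) \<and> (x \<notin> {..<m} \<longrightarrow> f x = 0)}"
    by (intro finite_set_of_finite_funs) auto
  ultimately show ?thesis by (rule finite_subset)
qed

lemma lambda_loc_upper:
  assumes "v \<in> sign_vecs m k" "i < r"
  shows "\<bar>matvec m X v i\<bar> \<le> lambda_loc r m X k"
proof -
  have "\<bar>matvec m X v i\<bar> \<le> Max ((\<lambda>i. \<bar>matvec m X v i\<bar>) ` {..<r})"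
    using assms(2) by (intro Max_ge) auto
  also have "\<dots> \<le> lambda_loc r m X k" unfolding lambda_loc_def
    using assms(1) by (intro Max_ge finite_imageI finite_sign_vecs) auto
  finally show ?thesis .
qed

lemma indicator_in_sign_vecs:
  assumes "C \<subseteq> {..<m}" "card C = k"
  shows "(\<lambda>c. if c \<in> C then 1 else 0 :: real) \<in> sign_vecs m k"
proof -
  have "{j. j < m \<and> (if j \<in> C then 1 else 0 :: real) \<noteq> 0} = C" using assms(1) by auto
  then show ?thesis using assms unfolding sign_vecs_def by auto
qed

lemma matvec_indicator:
  assumes "C \<subseteq> {..<m}"
  shows "matvec m X (\<lambda>c. if c \<in> C then 1 else 0) i = (\<Sum>c\<in>C. X i c)"
  using assms unfolding matvec_def
  by (simp add: if_distrib sum.If_cases Int_absorb1 cong: if_cong)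

section \<open>Likelihood ratios and testing\<close>

lemma poisson_likelihood_moment:
  fixes a b :: real assumes a: "0 < a" and b: "0 < b"
  shows "(\<integral>\<^sup>+ m. ennreal (pmf (poisson_pmf a) m / pmf (poisson_pmf b) m) \<partial>measure_pmf (poisson_pmf a))
         = ennreal (exp ((a - b)\<^sup>2 / b))"
proof -
  let ?c = "a\<^sup>2 / b"
  have pmf_term: "pmf (poisson_pmf a) m * (pmf (poisson_pmf a) m / pmf (poisson_pmf b) m)
        = exp (b - 2*a) * (?c ^ m / fact m)" for m
    using a b by (simp add: power2_eq_square power_mult_distrib power_divide exp_diff exp_add
         field_simps exp_minus mult_exp_exp)
  have exp_series: "(\<lambda>m::nat. ?c ^ m / fact m) sums exp ?c"
    using exp_converges[of ?c] by (simp add: field_simps divide_inverse[symmetric])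
  have "(\<integral>\<^sup>+ m. ennreal (pmf (poisson_pmf a) m / pmf (poisson_pmf b) m) \<partial>measure_pmf (poisson_pmf a))
      = (\<integral>\<^sup>+ m. ennreal (exp (b - 2*a) * (?c ^ m / fact m)) \<partial>count_space UNIV)"
    unfolding nn_integral_measure_pmf
    by (intro nn_integral_cong) (simp only: ennreal_mult'[symmetric, OF pmf_nonneg] pmf_term)
  also have "\<dots> = ennreal (\<Sum>m. exp (b - 2*a) * (?c ^ m / fact m))"
    using sums_summable[OF sums_mult[OF exp_series]] a b
    by (simp add: nn_integral_count_space_nat suminf_ennreal2)
  also have "(\<Sum>m. exp (b - 2*a) * (?c ^ m / fact m)) = exp (b - 2*a) * exp ?c"
    using sums_unique[OF sums_mult[OF exp_series]] by simp
  also have "\<dots> = exp ((a - b)\<^sup>2 / b)"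
    using b by (simp add: exp_add[symmetric] power2_eq_square field_simps)
  finally show ?thesis .
qed

lemma Pi_poisson_likelihood_moment:
  fixes a b :: "nat \<Rightarrow> real"
  assumes I: "finite I" and a: "\<And>i. i \<in> I \<Longrightarrow> 0 < a i" and b: "\<And>i. i \<in> I \<Longrightarrow> 0 < b i"
  shows "(\<integral>\<^sup>+ y. ennreal (pmf (Pi_pmf I 0 (\<lambda>i. poisson_pmf (a i))) y / pmf (Pi_pmf I 0 (\<lambda>i. poisson_pmf (b i))) y)
            \<partial>measure_pmf (Pi_pmf I 0 (\<lambda>i. poisson_pmf (a i))))
         = ennreal (exp (\<Sum>i\<in>I. (a i - b i)\<^sup>2 / b i))"
proof -
  let ?P = "Pi_pmf I 0 (\<lambda>i. poisson_pmf (a i))"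
  let ?Q = "Pi_pmf I 0 (\<lambda>i. poisson_pmf (b i))"
  let ?r = "\<lambda>i m. ennreal (pmf (poisson_pmf (a i)) m / pmf (poisson_pmf (b i)) m)"
  have "(\<integral>\<^sup>+ y. ennreal (pmf ?P y / pmf ?Q y) \<partial>measure_pmf ?P) = (\<integral>\<^sup>+ y. (\<Prod>i\<in>I. ?r i (y i)) \<partial>measure_pmf ?P)"
  proof (intro nn_integral_cong_AE, subst AE_measure_pmf_iff, intro ballI)
    fix y assume y: "y \<in> set_pmf ?P"
    have ext: "\<And>x. x \<notin> I \<Longrightarrow> y x = 0" using subsetD[OF set_Pi_pmf_subset[OF I] y] by simp
    have "pmf ?P y / pmf ?Q y = (\<Prod>i\<in>I. pmf (poisson_pmf (a i)) (y i)) / (\<Prod>i\<in>I. pmf (poisson_pmf (b i)) (y i))"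
      using ext I by (simp add: pmf_Pi')
    also have "\<dots> = (\<Prod>i\<in>I. pmf (poisson_pmf (a i)) (y i) / pmf (poisson_pmf (b i)) (y i))"
      by (rule prod_dividef[symmetric])
    finally show "ennreal (pmf ?P y / pmf ?Q y) = (\<Prod>i\<in>I. ?r i (y i))"
      by (simp add: prod_ennreal)
  qed
  also have "\<dots> = (\<Prod>i\<in>I. \<integral>\<^sup>+ m. ?r i m \<partial>measure_pmf (poisson_pmf (a i)))"
    by (rule nn_integral_prod_Pi_pmf[OF I])
  also have "\<dots> = (\<Prod>i\<in>I. ennreal (exp ((a i - b i)\<^sup>2 / b i)))"
    using a b by (intro prod.cong refl poisson_likelihood_moment) auto
  also have "\<dots> = ennreal (exp (\<Sum>i\<in>I. (a i - b i)\<^sup>2 / b i))"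
    by (simp add: prod_ennreal exp_sum I)
  finally show ?thesis .
qed

text \<open>Product Poisson laws with positive rates charge every extensional point, so any
  such law is absolutely continuous with respect to any other.\<close>
lemma Pi_poisson_abs_cont:
  fixes a b :: "nat \<Rightarrow> real"
  assumes I: "finite I" and b: "\<And>i. i \<in> I \<Longrightarrow> 0 < b i"
  assumes "pmf (Pi_pmf I 0 (\<lambda>i. poisson_pmf (b i))) y = 0"
  shows "pmf (Pi_pmf I 0 (\<lambda>i. poisson_pmf (a i))) y = 0"
proof (cases "\<forall>x. x \<notin> I \<longrightarrow> y x = 0")
  case True
  have "(\<Prod>i\<in>I. pmf (poisson_pmf (b i)) (y i)) > 0"
    using b by (intro prod_pos) simp
  moreover have "pmf (Pi_pmf I 0 (\<lambda>i. poisson_pmf (b i))) y = (\<Prod>i\<in>I. pmf (poisson_pmf (b i)) (y i))"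
    using True I by (intro pmf_Pi') auto
  ultimately show ?thesis using assms(3) by simp
next
  case False
  then show ?thesis using I by (intro pmf_Pi_outside) auto
qed

text \<open>Pointwise form of the testing bound: for q > 0, p \<le> u q + p (p/q) / (4u),
  which is (p - 2uq)^2 \<ge> 0.\<close>
lemma weighted_am_gm:
  fixes x q u :: real assumes q: "0 < q" and u: "0 < u"
  shows "x \<le> u * q + 1 / (4 * u) * (x * (x / q))"
proof -
  have "u * q + 1 / (4 * u) * (x * (x / q)) - x = (x - 2 * u * q)\<^sup>2 / (4 * u * q)"
    using q u by (simp add: field_simps power2_eq_square)
  moreover have "(x - 2 * u * q)\<^sup>2 / (4 * u * q) \<ge> 0" using q u by simp
  ultimately show ?thesis by linarith
qed

lemma prob_as_pmf_integral:
  "ennreal (measure_pmf.prob M Z) = (\<integral>\<^sup>+ y. ennreal (pmf M y) * indicator Z y \<partial>count_space UNIV)"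
  by (simp add: measure_pmf.emeasure_eq_measure[symmetric] nn_integral_measure_pmf[symmetric])

lemma prob_le_likelihood_moment:
  fixes P Q :: "'a pmf" and u R :: real
  assumes ac: "\<And>y. pmf Q y = 0 \<Longrightarrow> pmf P y = 0"
    and moment: "(\<integral>\<^sup>+ y. ennreal (pmf P y / pmf Q y) \<partial>measure_pmf P) = ennreal R"
    and u: "0 < u" and R: "0 \<le> R"
  shows "measure_pmf.prob P X \<le> u * measure_pmf.prob Q X + R / (4 * u)"
proof -
  have pointwise: "ennreal (pmf P y) * indicator X y \<le> ennreal (u * pmf Q y) * indicator X y
          + ennreal (1 / (4*u)) * (ennreal (pmf P y) * ennreal (pmf P y / pmf Q y))" for y
  proof (cases "pmf Q y = 0")
    case True then show ?thesis using ac by simp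
  next
    case False
    then have q: "pmf Q y > 0" using pmf_nonneg[of Q y] by linarith
    have "ennreal (pmf P y) \<le> ennreal (u * pmf Q y)
            + ennreal (1 / (4*u)) * (ennreal (pmf P y) * ennreal (pmf P y / pmf Q y))"
      using q u weighted_am_gm[OF q u, of "pmf P y"]
      by (simp add: ennreal_plus[symmetric] ennreal_mult''[symmetric] ennreal_le_iff del: ennreal_plus)
    then show ?thesis by (cases "y \<in> X") auto
  qed
  have "ennreal (measure_pmf.prob P X) = (\<integral>\<^sup>+ y. ennreal (pmf P y) * indicator X y \<partial>count_space UNIV)"
    by (rule prob_as_pmf_integral)
  also have "\<dots> \<le> (\<integral>\<^sup>+ y. ennreal (u * pmf Q y) * indicator X y
          + ennreal (1 / (4*u)) * (ennreal (pmf P y) * ennreal (pmf P y / pmf Q y)) \<partial>count_space UNIV)"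
    by (intro nn_integral_mono pointwise)
  also have "\<dots> = ennreal u * (\<integral>\<^sup>+ y. ennreal (pmf Q y) * indicator X y \<partial>count_space UNIV)
        + ennreal (1 / (4*u)) * (\<integral>\<^sup>+ y. ennreal (pmf P y) * ennreal (pmf P y / pmf Q y) \<partial>count_space UNIV)"
    using u by (simp add: nn_integral_add nn_integral_cmult ennreal_mult mult.assoc)
  also have "\<dots> = ennreal u * ennreal (measure_pmf.prob Q X) + ennreal (1 / (4 * u)) * ennreal R"
    using moment by (simp add: prob_as_pmf_integral nn_integral_measure_pmf)
  also have "\<dots> = ennreal (u * measure_pmf.prob Q X + R / (4 * u))"
    using u R by (simp add: ennreal_mult''[symmetric] ennreal_plus[symmetric] del: ennreal_plus)
  finally show ?thesis
    using u R by (subst (asm) ennreal_le_iff) (auto intro!: add_nonneg_nonneg)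
qed

lemma disjoint_tests_bound:
  fixes P :: "'j \<Rightarrow> 'a pmf" and Q :: "'a pmf" and A :: "'j \<Rightarrow> 'a set"
  assumes J: "finite J" and disj: "disjoint_family_on A J" and u: "0 < u"
    and b: "\<And>j. j \<in> J \<Longrightarrow> measure_pmf.prob (P j) (A j) \<le> u * measure_pmf.prob Q (A j) + R / (4 * u)"
  shows "(\<Sum>j\<in>J. measure_pmf.prob (P j) (A j)) \<le> u + real (card J) * (R / (4 * u))"
proof -
  have "(\<Sum>j\<in>J. measure_pmf.prob (P j) (A j)) \<le> (\<Sum>j\<in>J. u * measure_pmf.prob Q (A j) + R / (4 * u))"
    by (intro sum_mono b)
  also have "\<dots> = u * measure_pmf.prob Q (\<Union>j\<in>J. A j) + real (card J) * (R / (4 * u))"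
    using J disj by (simp add: sum.distrib sum_distrib_left measure_pmf.finite_measure_finite_Union)
  also have "measure_pmf.prob Q (\<Union>j\<in>J. A j) \<le> 1" by simp
  finally show ?thesis using u by (simp add: mult_left_le)
qed


section \<open>The packing of hypotheses for a fixed sparsity level k\<close>

locale lower_bound_setup =
  fixes al au :: real and n p s k :: nat and T \<delta> :: real and D At :: "nat \<Rightarrow> nat \<Rightarrow> real"
  assumes alau: "al < au" and n1: "1 \<le> n" and p10: "10 \<le> p" and k1: "1 \<le> k" and ks: "k \<le> s"
    and sp: "real s < real p / 3 - 1" and Tpos: "0 < T"
    and orth: "orthonormal_mat p D" and fc: "first_col_const p D"
    and Atb: "\<forall>i<n. \<forall>j<p. al / sqrt (real n) \<le> At i j \<and> At i j \<le> au / sqrt (real n)"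
    and dl0: "0 \<le> \<delta>"
    and iso: "\<forall>u::nat \<Rightarrow> real. (\<forall>j. p \<le> j \<longrightarrow> u j = 0) \<longrightarrow> card {j. j < p \<and> u j \<noteq> 0} \<le> 2 * s \<longrightarrow>
        (\<Sum>i<n. (matvec p At (matvec p D u) i)\<^sup>2) \<le> (1 + \<delta>) * (\<Sum>j<p. (u j)\<^sup>2)"
begin

text \<open>Block size m, and the column of D used for position j of block b
  (blocks occupy the columns 1, ..., m k \<le> p - 1, avoiding the constant column 0).\<close>
definition "m = (p - 1) div k"
definition "col b j = b * m + j + 1"

text \<open>The amplitude \<gamma> of the perturbations: small enough for nonnegativity
  (\<gamma> \<lambda>_k \<le> 1/p) and for indistinguishability (\<gamma>^2 T (1+\<delta>) / G^2 \<le> ln(m/2)).\<close>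
definition "lam = lambda_loc p (p - 1) (Dbar D) k"
definition "G = au - al"
definition "gam = sqrt (min (1 / ((real p)\<^sup>2 * lam\<^sup>2)) (G\<^sup>2 * ln (real m / 2) / (T * (1 + \<delta>))))"

definition "Codes = PiE {..<k} (\<lambda>_. {..<m})"
definition "hyp S i = (if i < p then 1 / real p + gam * (\<Sum>b<k. D i (col b (S b))) else 0)"

definition "Am = sensA al au n At"
definition "rate S i = T * matvec p Am (hyp S) i"
definition "law S = obs_law n p T Am (hyp S)"

text \<open>Since s < p/3 - 1, every block has m \<ge> 3 positions; the k m block columns fit
  into 1, ..., p - 1 (and nearly fill them), and distinct (block, position) pairs give
  distinct columns.\<close>

lemma p_large: "3 * k + 4 \<le> p"
proof -
  have "real k < real p / 3 - 1" using ks sp by linarith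
  then show ?thesis by linarith
qed

lemma m_ge3: "3 \<le> m"
proof -
  have "(3 * k) div k \<le> (p - 1) div k" using p_large by (intro div_le_mono) linarith
  then show ?thesis using k1 by (simp add: m_def)
qed

lemma blocks_fit: "m * k \<le> p - 1"
  unfolding m_def by (rule div_times_less_eq_dividend)

lemma blocks_nearly_cover: "p - 1 < (m + 1) * k"
proof -
  have "p - 1 = m * k + (p - 1) mod k" unfolding m_def by simp
  moreover have "(p - 1) mod k < k" using k1 by simp
  ultimately show ?thesis by simp
qed

lemma block_index_lt: assumes "b < k" "j < m" shows "b * m + j < p - 1"
proof -
  have "b * m + j < (b + 1) * m" using assms by simp
  also have "\<dots> \<le> k * m" using assms by (intro mult_right_mono) auto
  finally show ?thesis using blocks_fit by (simp add: mult.commute)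
qed

lemma col_lt: "b < k \<Longrightarrow> j < m \<Longrightarrow> col b j < p"
  using block_index_lt unfolding col_def by fastforce

lemma block_index_inj: assumes "j < m" "j' < m" "b * m + j = b' * m + j'" shows "b = b' \<and> j = j'"
proof -
  have "(b * m + j) div m = b" "(b * m + j) mod m = j" using assms(1) by auto
  moreover have "(b' * m + j') div m = b'" "(b' * m + j') mod m = j'" using assms(2) by auto
  ultimately show ?thesis using assms(3) by metis
qed

lemma col_inj: assumes "j < m" "j' < m" "col b j = col b' j'" shows "b = b' \<and> j = j'"
proof -
  have "b * m + j = b' * m + j'" using assms(3) unfolding col_def by simp
  then show ?thesis using block_index_inj[OF assms(1,2)] by blast
qed

lemma Codes_lt: "S \<in> Codes \<Longrightarrow> b < k \<Longrightarrow> S b < m"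
  unfolding Codes_def by auto

lemma Codes_upd: "S \<in> Codes \<Longrightarrow> b < k \<Longrightarrow> j < m \<Longrightarrow> S(b := j) \<in> Codes"
  unfolding Codes_def by (auto simp: PiE_iff extensional_def)

lemma Codes_finite: "finite Codes" unfolding Codes_def by (intro finite_PiE) auto

lemma Codes_ne: "(\<lambda>b. if b < k then 0 else undefined) \<in> Codes"
  unfolding Codes_def using m_ge3 by (auto simp: PiE_iff extensional_def)

lemma code_positions_inj: assumes S: "S \<in> Codes" shows "inj_on (\<lambda>b. b * m + S b) {..<k}"
proof (rule inj_onI)
  fix b b' assume "b \<in> {..<k}" "b' \<in> {..<k}" "b * m + S b = b' * m + S b'"
  then show "b = b'" using block_index_inj[of "S b" "S b'" b b'] Codes_lt[OF S] by auto
qed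

lemma code_hits: assumes S: "S \<in> Codes" and b: "b < k" and j: "j < m"
  shows "(\<Sum>b'<k. if col b j = col b' (S b') then 1 else 0 :: real) = (if j = S b then 1 else 0)"
proof -
  have "(\<Sum>b'<k. if col b j = col b' (S b') then 1 else 0 :: real)
      = (\<Sum>b'<k. if b' = b then (if j = S b then 1 else 0) else 0)"
  proof (intro sum.cong refl)
    fix b' assume "b' \<in> {..<k}"
    then show "(if col b j = col b' (S b') then 1 else 0 :: real) = (if b' = b then (if j = S b then 1 else 0) else 0)"
      using col_inj[OF j Codes_lt[OF S], of b' b b'] by auto
  qed
  then show ?thesis using b by simp
qed

lemma orthD: "c < p \<Longrightarrow> c' < p \<Longrightarrow> (\<Sum>i<p. D i c * D i c') = (if c = c' then 1 else 0)"
  using orth unfolding orthonormal_mat_def by blast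

text \<open>Non-constant columns are orthogonal to the constant first column.\<close>
lemma column_sum_zero: assumes "1 \<le> c" "c < p" shows "(\<Sum>i<p. D i c) = 0"
proof -
  have "(1 / sqrt (real p)) * (\<Sum>i<p. D i c) = (\<Sum>i<p. D i 0 * D i c)"
    using fc unfolding first_col_const_def by (simp add: sum_distrib_left)
  also have "\<dots> = 0" using orthD[of 0 c] assms by simp
  finally show ?thesis using p10 by simp
qed

text \<open>The perturbation of a code is D-bar times a k-sparse 0/1 vector, hence bounded
  entrywise by the localization constant.\<close>
lemma perturbation_le_lam: assumes S: "S \<in> Codes" and i: "i < p"
  shows "\<bar>\<Sum>b<k. D i (col b (S b))\<bar> \<le> lam"
proof -
  define C where "C = (\<lambda>b. b * m + S b) ` {..<k}"
  have C_sub: "C \<subseteq> {..<p - 1}" using block_index_lt Codes_lt[OF S] unfolding C_def by auto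
  have "card C = k" unfolding C_def using card_image[OF code_positions_inj[OF S]] by simp
  then have "\<bar>matvec (p - 1) (Dbar D) (\<lambda>c. if c \<in> C then 1 else 0) i\<bar> \<le> lam"
    unfolding lam_def using C_sub i by (intro lambda_loc_upper indicator_in_sign_vecs)
  moreover have "matvec (p - 1) (Dbar D) (\<lambda>c. if c \<in> C then 1 else 0) i = (\<Sum>b<k. D i (col b (S b)))"
    unfolding matvec_indicator[OF C_sub] unfolding C_def Dbar_def col_def
    by (subst sum.reindex[OF code_positions_inj[OF S]]) simp
  ultimately show ?thesis by simp
qed

lemma G_pos: "0 < G" unfolding G_def using alau by simp

lemma gam_radicand_nonneg: "0 \<le> min (1 / ((real p)\<^sup>2 * lam\<^sup>2)) (G\<^sup>2 * ln (real m / 2) / (T * (1 + \<delta>)))"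
proof -
  have "0 < ln (real m / 2)" using m_ge3 by simp
  then have "0 \<le> G\<^sup>2 * ln (real m / 2) / (T * (1 + \<delta>))"
    using Tpos dl0 by (intro divide_nonneg_pos) auto
  then show ?thesis by simp
qed

lemma gam_sq: "gam\<^sup>2 = min (1 / ((real p)\<^sup>2 * lam\<^sup>2)) (G\<^sup>2 * ln (real m / 2) / (T * (1 + \<delta>)))"
  unfolding gam_def using gam_radicand_nonneg by (rule real_sqrt_pow2)

lemma gam_nonneg: "0 \<le> gam"
  unfolding gam_def using gam_radicand_nonneg by (rule real_sqrt_ge_zero)

lemma gam_lam: "gam * lam \<le> 1 / real p"
proof (rule power2_le_imp_le)
  show "(gam * lam)\<^sup>2 \<le> (1 / real p)\<^sup>2"
  proof (cases "lam = 0")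
    case False
    have "(gam * lam)\<^sup>2 = gam\<^sup>2 * lam\<^sup>2" by (simp add: power_mult_distrib)
    also have "\<dots> \<le> 1 / ((real p)\<^sup>2 * lam\<^sup>2) * lam\<^sup>2"
      using gam_sq by (intro mult_right_mono) auto
    also have "\<dots> = (1 / real p)\<^sup>2" using False by (simp add: field_simps power2_eq_square)
    finally show ?thesis .
  qed simp
qed simp

lemma hyp_nonneg: assumes S: "S \<in> Codes" shows "0 \<le> hyp S i"
proof (cases "i < p")
  case True
  have "\<bar>gam * (\<Sum>b<k. D i (col b (S b)))\<bar> \<le> gam * lam"
    using perturbation_le_lam[OF S True] gam_nonneg by (simp add: abs_mult mult_left_mono)
  then show ?thesis using True gam_lam unfolding hyp_def by simp
qed (simp add: hyp_def)

lemma hyp_sum: assumes S: "S \<in> Codes" shows "(\<Sum>i<p. hyp S i) = 1"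
proof -
  have "(\<Sum>i<p. hyp S i) = (\<Sum>i<p. 1 / real p) + gam * (\<Sum>b<k. \<Sum>i<p. D i (col b (S b)))"
    unfolding hyp_def by (simp add: sum.distrib sum_distrib_left sum.swap[of _ "{..<k}"])
  also have "(\<Sum>b<k. \<Sum>i<p. D i (col b (S b))) = 0"
    using col_lt Codes_lt[OF S] by (intro sum.neutral ballI column_sum_zero) (auto simp: col_def)
  finally show ?thesis using p10 by simp
qed

lemma coef_hyp: assumes S: "S \<in> Codes" and c: "1 \<le> c" "c < p"
  shows "(\<Sum>i<p. D i c * hyp S i) = gam * (\<Sum>b<k. if c = col b (S b) then 1 else 0)"
proof -
  have "(\<Sum>i<p. D i c * hyp S i)
      = (1 / real p) * (\<Sum>i<p. D i c) + gam * (\<Sum>b<k. \<Sum>i<p. D i c * D i (col b (S b)))"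
    unfolding hyp_def
    by (simp add: algebra_simps sum.distrib sum_distrib_left sum_divide_distrib sum.swap[of _ "{..<k}"])
  also have "(\<Sum>i<p. D i c) = 0" by (rule column_sum_zero[OF c])
  also have "(\<Sum>b<k. \<Sum>i<p. D i c * D i (col b (S b))) = (\<Sum>b<k. if c = col b (S b) then 1 else 0)"
    using col_lt Codes_lt[OF S] c by (intro sum.cong refl orthD) auto
  finally show ?thesis by simp
qed

lemma hyp_sparse: assumes S: "S \<in> Codes"
  shows "card {j. j < p - 1 \<and> (\<Sum>i<p. Dbar D i j * hyp S i) \<noteq> 0} \<le> s"
proof -
  have "{j. j < p - 1 \<and> (\<Sum>i<p. Dbar D i j * hyp S i) \<noteq> 0} \<subseteq> (\<lambda>b. b * m + S b) ` {..<k}"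
  proof
    fix j assume "j \<in> {j. j < p - 1 \<and> (\<Sum>i<p. Dbar D i j * hyp S i) \<noteq> 0}"
    then have "j < p - 1" and "(\<Sum>i<p. D i (j + 1) * hyp S i) \<noteq> 0" by (auto simp: Dbar_def)
    then have "(\<Sum>b<k. if j + 1 = col b (S b) then 1 else 0 :: real) \<noteq> 0"
      using coef_hyp[OF S, of "j + 1"] by auto
    then have "\<exists>b<k. j + 1 = col b (S b)"
      by (rule contrapos_np) (auto intro: sum.neutral)
    then obtain b where "b < k" "j + 1 = col b (S b)" by blast
    then show "j \<in> (\<lambda>b. b * m + S b) ` {..<k}" unfolding col_def by auto
  qed
  then have "card {j. j < p - 1 \<and> (\<Sum>i<p. Dbar D i j * hyp S i) \<noteq> 0} \<le> card ((\<lambda>b. b * m + S b) ` {..<k})"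
    by (intro card_mono) auto
  also have "\<dots> \<le> k" using card_image_le[of "{..<k}"] by simp
  finally show ?thesis using ks by linarith
qed

lemma hyp_in_class: assumes S: "S \<in> Codes" shows "hyp S \<in> FTsD p s D"
proof -
  have "(\<Sum>i<p. \<bar>hyp S i\<bar>) = 1" using hyp_sum[OF S] hyp_nonneg[OF S] by simp
  moreover have "\<forall>i. p \<le> i \<longrightarrow> hyp S i = 0" by (simp add: hyp_def)
  ultimately show ?thesis
    using hyp_nonneg[OF S] hyp_sparse[OF S] unfolding FTsD_def by blast
qed

lemma sqrt_n_pos: "0 < sqrt (real n)" using n1 by simp

lemma Am_eq: "Am i j = (At i j + (au - 2 * al) / sqrt (real n)) / (2 * G * sqrt (real n))"
  unfolding Am_def sensA_def G_def by simp

lemma Am_lower: assumes "i < n" "j < p" shows "1 / (2 * real n) \<le> Am i j"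
proof -
  have "al / sqrt (real n) \<le> At i j" using Atb assms by blast
  then have "G / sqrt (real n) \<le> At i j + (au - 2 * al) / sqrt (real n)"
    unfolding G_def by (simp add: diff_divide_distrib add_divide_distrib field_simps)
  then have "G / sqrt (real n) / (2 * G * sqrt (real n)) \<le> Am i j"
    unfolding Am_eq using G_pos sqrt_n_pos by (intro divide_right_mono) auto
  moreover have "G / sqrt (real n) / (2 * G * sqrt (real n)) = 1 / (2 * real n)"
    using G_pos sqrt_n_pos n1 by (simp add: field_simps)
  ultimately show ?thesis by simp
qed

lemma rate_lower: assumes S: "S \<in> Codes" and i: "i < n"
  shows "T / (2 * real n) \<le> rate S i"
proof -
  have "1 / (2 * real n) = (\<Sum>j<p. 1 / (2 * real n) * hyp S j)"
    using hyp_sum[OF S] by (simp add: sum_divide_distrib[symmetric])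
  also have "\<dots> \<le> matvec p Am (hyp S) i"
    unfolding matvec_def using Am_lower[OF i] hyp_nonneg[OF S] by (intro sum_mono mult_right_mono) auto
  finally have "T * (1 / (2 * real n)) \<le> T * matvec p Am (hyp S) i"
    using Tpos by (intro mult_left_mono) auto
  then show ?thesis unfolding rate_def by simp
qed

lemma rate_pos: assumes "S \<in> Codes" "i < n" shows "0 < rate S i"
proof -
  have "0 < T / (2 * real n)" using Tpos n1 by simp
  then show ?thesis using rate_lower[OF assms] by linarith
qed

text \<open>For two probability vectors the constant offset in Assumption 1 cancels, so rate
  differences only see the matrix A-tilde.\<close>
lemma Am_diff: assumes "(\<Sum>j<p. f j) = (\<Sum>j<p. f' j)"
  shows "matvec p Am f i - matvec p Am f' i = (\<Sum>j<p. At i j * (f j - f' j)) / (2 * G * sqrt (real n))"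
proof -
  define \<beta> where "\<beta> = (au - 2 * al) / sqrt (real n) / (2 * G * sqrt (real n))"
  have split: "Am i j * x = At i j * x / (2 * G * sqrt (real n)) + \<beta> * x" for j x
    unfolding Am_eq \<beta>_def by (simp add: add_divide_distrib algebra_simps)
  have "matvec p Am f i - matvec p Am f' i = (\<Sum>j<p. Am i j * (f j - f' j))"
    unfolding matvec_def by (simp add: sum_subtractf[symmetric] algebra_simps)
  also have "\<dots> = (\<Sum>j<p. At i j * (f j - f' j) / (2 * G * sqrt (real n))) + \<beta> * (\<Sum>j<p. (f j - f' j))"
    unfolding split by (simp add: sum.distrib sum_distrib_left)
  also have "(\<Sum>j<p. (f j - f' j)) = 0" using assms by (simp add: sum_subtractf)
  finally show ?thesis by (simp add: sum_divide_distrib)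
qed

lemma hyp_upd_diff: assumes b: "b < k" and i: "i < p"
  shows "hyp (S(b := j)) i - hyp S i = gam * (D i (col b j) - D i (col b (S b)))"
proof -
  have "(\<Sum>b'<k. D i (col b' ((S(b := j)) b'))) - (\<Sum>b'<k. D i (col b' (S b')))
      = (\<Sum>b'<k. if b' = b then D i (col b j) - D i (col b (S b)) else 0)"
    unfolding sum_subtractf[symmetric] by (intro sum.cong) auto
  also have "\<dots> = D i (col b j) - D i (col b (S b))" using b by simp
  finally show ?thesis using i unfolding hyp_def by (simp add: right_diff_distrib[symmetric])
qed

text \<open>By Assumption 2 applied to the 2-sparse vector \<gamma>(e_new - e_old), the image of such
  a move under A-tilde has squared norm at most 2 (1 + \<delta>) \<gamma>^2.\<close>
lemma move_energy: assumes b: "b < k" and c1: "c1 = col b j" "j < m" and c0: "c0 = col b j0" "j0 < m"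
  shows "(\<Sum>i<n. (\<Sum>q<p. At i q * (gam * (D q c1 - D q c0)))\<^sup>2) \<le> 2 * (1 + \<delta>) * gam\<^sup>2"
proof -
  have c1p: "c1 < p" and c0p: "c0 < p" using col_lt b c1 c0 by auto
  define u where "u q = gam * ((if q = c1 then 1 else 0) - (if q = c0 then 1 else 0))" for q
  have delta: "(\<Sum>r<p. D q r * (if r = c then 1 else 0)) = D q c" if "c < p" for q c
  proof -
    have "(\<Sum>r<p. D q r * (if r = c then 1 else 0)) = (\<Sum>r<p. if r = c then D q r else 0)"
      by (intro sum.cong) auto
    then show ?thesis using that by simp
  qed
  have Du: "matvec p D u q = gam * (D q c1 - D q c0)" for q
  proof -
    have "matvec p D u q = gam * (\<Sum>r<p. D q r * (if r = c1 then 1 else 0))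
                          - gam * (\<Sum>r<p. D q r * (if r = c0 then 1 else 0))"
      unfolding matvec_def u_def by (simp add: sum_distrib_left sum_subtractf[symmetric] algebra_simps)
    then show ?thesis using delta c1p c0p by (simp add: algebra_simps)
  qed
  have hAt: "matvec p At (matvec p D u) i = (\<Sum>q<p. At i q * (gam * (D q c1 - D q c0)))" for i
    by (simp only: Du matvec_def[of p At])
  have usq: "(\<Sum>q<p. (u q)\<^sup>2) \<le> 2 * gam\<^sup>2"
  proof -
    have "(\<Sum>q<p. (u q)\<^sup>2) \<le> (\<Sum>q<p. gam\<^sup>2 * ((if q = c1 then 1 else 0) + (if q = c0 then 1 else 0)))"
      unfolding u_def by (intro sum_mono) (auto simp: power_mult_distrib power2_eq_square)
    also have "\<dots> = 2 * gam\<^sup>2" using c1p c0p by (simp add: sum.distrib sum_distrib_left[symmetric])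
    finally show ?thesis .
  qed
  have support: "{q. q < p \<and> u q \<noteq> 0} \<subseteq> {c1, c0}" unfolding u_def by auto
  have "card {q. q < p \<and> u q \<noteq> 0} \<le> card {c1, c0}" by (intro card_mono support) simp
  also have "\<dots> \<le> 2" by (simp add: card_insert_le_m1)
  finally have "card {q. q < p \<and> u q \<noteq> 0} \<le> 2 * s" using ks k1 by linarith
  moreover have "\<forall>q. p \<le> q \<longrightarrow> u q = 0" unfolding u_def using c1p c0p by auto
  ultimately have "(\<Sum>i<n. (matvec p At (matvec p D u) i)\<^sup>2) \<le> (1 + \<delta>) * (\<Sum>q<p. (u q)\<^sup>2)"
    using iso by blast
  also have "\<dots> \<le> (1 + \<delta>) * (2 * gam\<^sup>2)" using usq dl0 by (intro mult_left_mono) auto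
  finally show ?thesis unfolding hAt by (simp add: algebra_simps)
qed

text \<open>Chi-square-type divergence between the laws of two codes differing in one block:
  \<Sigma>_i (a_i - c_i)^2 / c_i \<le> T (1 + \<delta>) \<gamma>^2 / G^2.  Each term is bounded using
  c_i \<ge> T/(2n) together with the previous lemma.\<close>
lemma chi_square_bound: assumes S: "S \<in> Codes" and b: "b < k" and j: "j < m"
  shows "(\<Sum>i<n. (rate (S(b := j)) i - rate S i)\<^sup>2 / rate S i) \<le> T * (1 + \<delta>) * gam\<^sup>2 / G\<^sup>2"
proof -
  define h where "h i = (\<Sum>q<p. At i q * (hyp (S(b := j)) q - hyp S q))" for i
  have per_term: "(rate (S(b := j)) i - rate S i)\<^sup>2 / rate S i \<le> T * (h i)\<^sup>2 / (2 * G\<^sup>2)"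
    if i: "i < n" for i
  proof -
    have "rate (S(b := j)) i - rate S i = T * h i / (2 * G * sqrt (real n))"
      using Am_diff[of "hyp (S(b := j))" "hyp S" i] hyp_sum[OF Codes_upd[OF S b j]] hyp_sum[OF S]
      unfolding h_def rate_def by (simp add: right_diff_distrib[symmetric])
    moreover have "(T * h i / (2 * G * sqrt (real n)))\<^sup>2 / rate S i
        \<le> (T * h i / (2 * G * sqrt (real n)))\<^sup>2 / (T / (2 * real n))"
      using rate_lower[OF S i] rate_pos[OF S i] Tpos n1 by (intro divide_left_mono mult_pos_pos) auto
    moreover have "(T * h i / (2 * G * sqrt (real n)))\<^sup>2 / (T / (2 * real n)) = T * (h i)\<^sup>2 / (2 * G\<^sup>2)"
      using Tpos G_pos sqrt_n_pos n1 by (simp add: field_simps power2_eq_square)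
    ultimately show ?thesis by simp
  qed
  have "h i = (\<Sum>q<p. At i q * (gam * (D q (col b j) - D q (col b (S b)))))" for i
    unfolding h_def by (intro sum.cong refl) (simp add: hyp_upd_diff[OF b])
  then have energy: "(\<Sum>i<n. (h i)\<^sup>2) \<le> 2 * (1 + \<delta>) * gam\<^sup>2"
    using move_energy[OF b refl j refl Codes_lt[OF S b]] by simp
  have "(\<Sum>i<n. (rate (S(b := j)) i - rate S i)\<^sup>2 / rate S i) \<le> (\<Sum>i<n. T * (h i)\<^sup>2 / (2 * G\<^sup>2))"
    by (intro sum_mono per_term) auto
  also have "\<dots> = T / (2 * G\<^sup>2) * (\<Sum>i<n. (h i)\<^sup>2)" by (simp add: sum_distrib_left)
  also have "\<dots> \<le> T / (2 * G\<^sup>2) * (2 * (1 + \<delta>) * gam\<^sup>2)"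
    using energy Tpos by (intro mult_left_mono) auto
  also have "\<dots> = T * (1 + \<delta>) * gam\<^sup>2 / G\<^sup>2" using G_pos by (simp add: field_simps)
  finally show ?thesis .
qed

lemma divergence_budget: "T * (1 + \<delta>) * gam\<^sup>2 / G\<^sup>2 \<le> ln (real m / 2)"
proof -
  have "gam\<^sup>2 \<le> G\<^sup>2 * ln (real m / 2) / (T * (1 + \<delta>))" using gam_sq by simp
  moreover have "0 < T * (1 + \<delta>)" using Tpos dl0 by simp
  ultimately have "T * (1 + \<delta>) * gam\<^sup>2 \<le> G\<^sup>2 * ln (real m / 2)" by (simp add: field_simps)
  then show ?thesis using G_pos by (simp add: field_simps)
qed

lemma one_block_change: assumes S: "S \<in> Codes" and b: "b < k" and j: "j < m"
  shows "measure_pmf.prob (law (S(b := j))) X \<le> real m / 2 * measure_pmf.prob (law S) X + (real m / 2) / (4 * (real m / 2))"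
proof -
  define E where "E = (\<Sum>i<n. (rate (S(b := j)) i - rate S i)\<^sup>2 / rate S i)"
  have laws: "law S' = Pi_pmf {..<n} 0 (\<lambda>i. poisson_pmf (rate S' i))" for S'
    unfolding law_def obs_law_def rate_def ..
  have pos: "\<And>i. i \<in> {..<n} \<Longrightarrow> 0 < rate S i" "\<And>i. i \<in> {..<n} \<Longrightarrow> 0 < rate (S(b := j)) i"
    using rate_pos S Codes_upd[OF S b j] by auto
  have "exp E \<le> exp (ln (real m / 2))"
    using chi_square_bound[OF S b j] divergence_budget unfolding E_def by simp
  also have "\<dots> = real m / 2" using m_ge3 by simp
  finally have expE: "exp E \<le> real m / 2" .
  have m2: "0 < real m / 2" using m_ge3 by simp
  have "measure_pmf.prob (law (S(b := j))) X \<le> real m / 2 * measure_pmf.prob (law S) X + exp E / (4 * (real m / 2))"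
    unfolding laws
  proof (rule prob_le_likelihood_moment[OF _ _ m2])
    show "pmf (Pi_pmf {..<n} 0 (\<lambda>i. poisson_pmf (rate S i))) y = 0
          \<Longrightarrow> pmf (Pi_pmf {..<n} 0 (\<lambda>i. poisson_pmf (rate (S(b := j)) i))) y = 0" for y
      by (rule Pi_poisson_abs_cont) (use pos in auto)
    show "(\<integral>\<^sup>+ y. ennreal (pmf (Pi_pmf {..<n} 0 (\<lambda>i. poisson_pmf (rate (S(b := j)) i))) y
                         / pmf (Pi_pmf {..<n} 0 (\<lambda>i. poisson_pmf (rate S i))) y)
            \<partial>measure_pmf (Pi_pmf {..<n} 0 (\<lambda>i. poisson_pmf (rate (S(b := j)) i)))) = ennreal (exp E)"
      unfolding E_def by (rule Pi_poisson_likelihood_moment) (use pos in auto)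
  qed simp
  also have "exp E / (4 * (real m / 2)) \<le> (real m / 2) / (4 * (real m / 2))"
    using expE m2 by (intro divide_right_mono) auto
  finally show ?thesis by simp
qed

text \<open>Coefficients of an estimate on the block columns, and the region where the block-b
  test on them decides for position j (squared distance to \<gamma> e_j below \<gamma>^2/2).\<close>
definition "coef fhat y b j = (\<Sum>i<p. D i (col b j) * fhat y i)"
definition "region fhat b j =
  {y. (\<Sum>j'<m. (coef fhat y b j' - gam * (if j' = j then 1 else 0))\<^sup>2) < gam\<^sup>2 / 2}"

text \<open>The targets \<gamma> e_j are at distance \<gamma> sqrt 2 from each other, so the regions of one
  block are pairwise disjoint.\<close>
lemma region_disjoint: assumes "j < m" "j' < m" "j \<noteq> j'"
  shows "region fhat b j \<inter> region fhat b j' = {}"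
proof (rule ccontr)
  assume "region fhat b j \<inter> region fhat b j' \<noteq> {}"
  then obtain y where y: "y \<in> region fhat b j" "y \<in> region fhat b j'" by blast
  define e where "e l j0 = gam * (if l = j0 then 1 else 0)" for l j0 :: nat
  define x where "x l = coef fhat y b l" for l
  have close: "(\<Sum>l<m. (x l - e l j)\<^sup>2) < gam\<^sup>2 / 2" "(\<Sum>l<m. (x l - e l j')\<^sup>2) < gam\<^sup>2 / 2"
    using y unfolding region_def x_def e_def by simp_all
  have triangle: "(e l j - e l j')\<^sup>2 \<le> 2 * (x l - e l j)\<^sup>2 + 2 * (x l - e l j')\<^sup>2" for l
  proof -
    have "0 \<le> (2 * x l - e l j - e l j')\<^sup>2" by simp
    then show ?thesis by (simp add: power2_eq_square algebra_simps)
  qed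
  have "2 * gam\<^sup>2 = (\<Sum>l<m. gam\<^sup>2 * ((if l = j then 1 else 0) + (if l = j' then 1 else 0)))"
    using assms by (simp add: sum.distrib sum_distrib_left[symmetric])
  also have "\<dots> = (\<Sum>l<m. (e l j - e l j')\<^sup>2)"
    unfolding e_def using assms(3) by (intro sum.cong refl) (auto simp: power2_eq_square)
  also have "\<dots> \<le> (\<Sum>l<m. 2 * (x l - e l j)\<^sup>2 + 2 * (x l - e l j')\<^sup>2)"
    by (intro sum_mono triangle)
  also have "\<dots> = 2 * (\<Sum>l<m. (x l - e l j)\<^sup>2) + 2 * (\<Sum>l<m. (x l - e l j')\<^sup>2)"
    by (simp add: sum.distrib sum_distrib_left)
  finally show False using close by linarith
qed

lemma coef_error: assumes S: "S \<in> Codes" and b: "b < k" and j: "j < m"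
  shows "(\<Sum>i<p. D i (col b j) * (fhat y i - hyp S i)) = coef fhat y b j - gam * (if j = S b then 1 else 0)"
proof -
  have "(\<Sum>i<p. D i (col b j) * (fhat y i - hyp S i)) = coef fhat y b j - (\<Sum>i<p. D i (col b j) * hyp S i)"
    unfolding coef_def by (simp add: right_diff_distrib sum_subtractf)
  also have "(\<Sum>i<p. D i (col b j) * hyp S i) = gam * (if j = S b then 1 else 0)"
    using coef_hyp[OF S _ col_lt[OF b j]] code_hits[OF S b j] by (simp add: col_def)
  finally show ?thesis .
qed

text \<open>By Bessel's inequality over the k m block columns, each block whose test fails
  contributes at least \<gamma>^2/2 to the squared error.\<close>
lemma loss_lower: assumes S: "S \<in> Codes"
  shows "gam\<^sup>2 / 2 * (\<Sum>b<k. indicator (- region fhat b (S b)) y) \<le> (\<Sum>i<p. (fhat y i - hyp S i)\<^sup>2)"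
proof -
  let ?err = "\<lambda>b j. coef fhat y b j - gam * (if j = S b then 1 else 0)"
  have block: "gam\<^sup>2 / 2 * indicator (- region fhat b (S b)) y \<le> (\<Sum>j<m. (?err b j)\<^sup>2)" for b
    by (cases "y \<in> region fhat b (S b)")
       (auto simp: region_def not_less eq_commute[of _ "S b"] intro: sum_nonneg)
  have "gam\<^sup>2 / 2 * (\<Sum>b<k. indicator (- region fhat b (S b)) y) \<le> (\<Sum>b<k. \<Sum>j<m. (?err b j)\<^sup>2)"
    unfolding sum_distrib_left by (intro sum_mono block)
  also have "\<dots> = (\<Sum>t\<in>{..<k} \<times> {..<m}. (\<Sum>i<p. D i (col (fst t) (snd t)) * (fhat y i - hyp S i))\<^sup>2)"
    unfolding sum.cartesian_product by (intro sum.cong refl) (auto simp: coef_error[OF S])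
  also have "\<dots> \<le> (\<Sum>i<p. (fhat y i - hyp S i)\<^sup>2)"
  proof (rule bessel_inequality)
    fix t t' assume t: "t \<in> {..<k} \<times> {..<m}" and t': "t' \<in> {..<k} \<times> {..<m}"
    then have "col (fst t) (snd t) = col (fst t') (snd t') \<longleftrightarrow> t = t'"
      using col_inj[of "snd t" "snd t'" "fst t" "fst t'"] by (auto simp: prod_eq_iff)
    moreover have "col (fst t) (snd t) < p" "col (fst t') (snd t') < p" using t t' col_lt by auto
    ultimately show "(\<Sum>i<p. D i (col (fst t) (snd t)) * D i (col (fst t') (snd t'))) = (if t = t' then 1 else 0)"
      using orthD by simp
  qed simp
  finally show ?thesis .
qed

lemma risk_lower: assumes S: "S \<in> Codes"
  shows "ennreal (gam\<^sup>2 / 2 * (\<Sum>b<k. 1 - measure_pmf.prob (law S) (region fhat b (S b))))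
       \<le> risk n p T Am fhat (hyp S)"
proof -
  let ?M = "measure_pmf (law S)"
  define g where "g y = gam\<^sup>2 / 2 * (\<Sum>b<k. indicator (- region fhat b (S b)) y :: real)" for y
  have ind: "integrable ?M (indicator X :: _ \<Rightarrow> real)" for X
    by (rule integrable_real_indicator) (auto simp: measure_pmf.emeasure_eq_measure)
  have "(\<integral>\<^sup>+ y. ennreal (g y) \<partial>?M) = ennreal (\<integral> y. g y \<partial>?M)"
    unfolding g_def using ind by (intro nn_integral_eq_integral) (auto intro!: AE_I2 sum_nonneg mult_nonneg_nonneg)
  also have "(\<integral> y. g y \<partial>?M) = gam\<^sup>2 / 2 * (\<Sum>b<k. measure_pmf.prob (law S) (- region fhat b (S b)))"
    unfolding g_def using ind by (simp add: Bochner_Integration.integral_sum)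
  also have "\<dots> = gam\<^sup>2 / 2 * (\<Sum>b<k. 1 - measure_pmf.prob (law S) (region fhat b (S b)))"
    by (simp add: measure_pmf.prob_compl[symmetric] Compl_eq_Diff_UNIV)
  finally have "ennreal (gam\<^sup>2 / 2 * (\<Sum>b<k. 1 - measure_pmf.prob (law S) (region fhat b (S b))))
      = (\<integral>\<^sup>+ y. ennreal (g y) \<partial>?M)" ..
  also have "\<dots> \<le> (\<integral>\<^sup>+ y. ennreal (\<Sum>i<p. (fhat y i - hyp S i)\<^sup>2) \<partial>?M)"
    unfolding g_def by (intro nn_integral_mono ennreal_leI loss_lower[OF S])
  finally show ?thesis unfolding risk_def law_def .
qed

text \<open>Within one block, the m tests can jointly succeed with probability at most 3m/4:
  combine the disjointness of the regions with the one-block change-of-measure bound.\<close>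
lemma block_success: assumes S: "S \<in> Codes" and b: "b < k"
  shows "(\<Sum>j<m. measure_pmf.prob (law (S(b := j))) (region fhat b j)) \<le> 3 * real m / 4"
proof -
  have m2: "0 < real m / 2" using m_ge3 by simp
  have "disjoint_family_on (region fhat b) {..<m}"
    unfolding disjoint_family_on_def using region_disjoint by (metis lessThan_iff)
  then have "(\<Sum>j<m. measure_pmf.prob (law (S(b := j))) (region fhat b j))
      \<le> real m / 2 + real (card {..<m}) * ((real m / 2) / (4 * (real m / 2)))"
    using m2 one_block_change[OF S b] by (intro disjoint_tests_bound) auto
  also have "\<dots> = 3 * real m / 4" using m2 by (simp add: field_simps)
  finally show ?thesis .
qed

lemma card_Codes_split: "b < k \<Longrightarrow> real (card Codes) = real m * real (card (PiE ({..<k} - {b}) (\<lambda>_. {..<m})))"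
  using sum_PiE_split[of b "{..<k}" "\<lambda>_. 1 :: real" "\<lambda>_. {..<m}"] by (simp add: Codes_def)

lemma average_success: assumes b: "b < k"
  shows "(\<Sum>S\<in>Codes. measure_pmf.prob (law S) (region fhat b (S b))) \<le> 3 / 4 * real (card Codes)"
proof -
  let ?R = "PiE ({..<k} - {b}) (\<lambda>_. {..<m})"
  have "(\<Sum>S\<in>Codes. measure_pmf.prob (law S) (region fhat b (S b)))
      = (\<Sum>\<sigma>\<in>?R. \<Sum>j<m. measure_pmf.prob (law (\<sigma>(b := j))) (region fhat b j))"
    using b unfolding Codes_def by (subst sum_PiE_split[of b]) auto
  also have "\<dots> \<le> (\<Sum>\<sigma>\<in>?R. 3 * real m / 4)"
  proof (intro sum_mono)
    fix \<sigma> assume "\<sigma> \<in> ?R"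
    then have "\<sigma>(b := 0) \<in> Codes" using m_ge3 b unfolding Codes_def by (auto simp: PiE_iff extensional_def)
    from block_success[OF this b]
    show "(\<Sum>j<m. measure_pmf.prob (law (\<sigma>(b := j))) (region fhat b j)) \<le> 3 * real m / 4" by simp
  qed
  also have "\<dots> = 3 / 4 * real (card Codes)" using card_Codes_split[OF b] by simp
  finally show ?thesis .
qed

lemma risk_ge_gam_sq: "ennreal (gam\<^sup>2 * real k / 8) \<le> (SUP f\<in>FTsD p s D. risk n p T Am fhat f)"
proof -
  let ?N = "real (card Codes)"
  define v where "v S = gam\<^sup>2 / 2 * (\<Sum>b<k. 1 - measure_pmf.prob (law S) (region fhat b (S b)))" for S
  have "(\<Sum>S\<in>Codes. \<Sum>b<k. measure_pmf.prob (law S) (region fhat b (S b)))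
      = (\<Sum>b<k. \<Sum>S\<in>Codes. measure_pmf.prob (law S) (region fhat b (S b)))" by (rule sum.swap)
  also have "\<dots> \<le> (\<Sum>b<k. 3 / 4 * ?N)" by (intro sum_mono average_success) simp
  finally have success: "(\<Sum>S\<in>Codes. \<Sum>b<k. measure_pmf.prob (law S) (region fhat b (S b)))
      \<le> real k * (3 / 4 * ?N)" by simp
  have "(\<Sum>S\<in>Codes. v S) = ?N * (gam\<^sup>2 / 2 * real k)
          - gam\<^sup>2 / 2 * (\<Sum>S\<in>Codes. \<Sum>b<k. measure_pmf.prob (law S) (region fhat b (S b)))"
    unfolding v_def by (simp add: sum_subtractf sum_distrib_left right_diff_distrib)
  also have "\<dots> \<ge> ?N * (gam\<^sup>2 / 2 * real k) - gam\<^sup>2 / 2 * (real k * (3 / 4 * ?N))"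
    using success by (intro diff_left_mono mult_left_mono) auto
  finally have "?N * (gam\<^sup>2 * real k / 8) \<le> (\<Sum>S\<in>Codes. v S)" by (simp add: algebra_simps)
  then obtain S where S: "S \<in> Codes" and vS: "gam\<^sup>2 * real k / 8 \<le> v S"
    using exists_ge_average[OF Codes_finite] Codes_ne by blast
  have "ennreal (gam\<^sup>2 * real k / 8) \<le> risk n p T Am fhat (hyp S)"
    using ennreal_leI[OF vS] risk_lower[OF S] unfolding v_def by (rule order_trans)
  also have "\<dots> \<le> (SUP f\<in>FTsD p s D. risk n p T Am fhat f)"
    using hyp_in_class[OF S] by (rule SUP_upper)
  finally show ?thesis .
qed


text \<open>The logarithmic factor of the theorem is at most five times ln(m/2), since
  (p - k - 1)/(k/2) \<le> 2m \<le> (m/2)^5 for m \<ge> 3.\<close>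
lemma log_factor_bounds:
  shows "0 \<le> ln ((real p - real k - 1) / (real k / 2))"
    and "ln ((real p - real k - 1) / (real k / 2)) \<le> 5 * ln (real m / 2)"
proof -
  have kpos: "0 < real k" using k1 by simp
  have m3: "3 \<le> real m" using m_ge3 by simp
  have lower: "1 \<le> (real p - real k - 1) / (real k / 2)" using kpos p_large by (simp add: field_simps)
  have "real (p - 1) < real ((m + 1) * k)" using blocks_nearly_cover by linarith
  then have "real p - 1 < (real m + 1) * real k" using p10 by (simp add: of_nat_diff algebra_simps)
  then have upper: "(real p - real k - 1) / (real k / 2) \<le> 2 * real m" using kpos by (simp add: field_simps)
  have "64 \<le> real m ^ 4" using power_mono[of 3 "real m" 4] m3 by simp
  then have "64 * real m \<le> real m ^ 4 * real m" using m3 by (intro mult_right_mono) auto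
  moreover have "real m ^ 4 * real m = real m ^ 5" by (simp add: numeral_eq_Suc)
  ultimately have "2 * real m \<le> (real m / 2) ^ 5" by (simp add: power_divide)
  then have "ln ((real p - real k - 1) / (real k / 2)) \<le> ln ((real m / 2) ^ 5)"
    using lower upper by simp
  also have "\<dots> = 5 * ln (real m / 2)" using m3 by (simp add: ln_realpow)
  finally show "ln ((real p - real k - 1) / (real k / 2)) \<le> 5 * ln (real m / 2)" .
  show "0 \<le> ln ((real p - real k - 1) / (real k / 2))" using lower by simp
qed

lemma minimax_bound_fixed_k:
  "ennreal (min 1 (G\<^sup>2 / 5) / 8 * min (real k / ((real p)\<^sup>2 * lam\<^sup>2))
        (real k / ((1 + \<delta>) * T) * ln ((real p - real k - 1) / (real k / 2))))
   \<le> (SUP f\<in>FTsD p s D. risk n p T Am fhat f)"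
proof -
  define a where "a = real k / ((real p)\<^sup>2 * lam\<^sup>2)"
  define r where "r = real k / ((1 + \<delta>) * T) * ln ((real p - real k - 1) / (real k / 2))"
  define c where "c = min 1 (G\<^sup>2 / 5)"
  have Td: "0 < T * (1 + \<delta>)" using Tpos dl0 by simp
  have a0: "0 \<le> a" unfolding a_def by simp
  have r0: "0 \<le> r" unfolding r_def using log_factor_bounds(1) Td by (simp add: mult.commute)
  have c0: "0 \<le> c" "c \<le> 1" "c \<le> G\<^sup>2 / 5" unfolding c_def by auto
  have "c * min a r \<le> gam\<^sup>2 * real k"
  proof (cases "1 / ((real p)\<^sup>2 * lam\<^sup>2) \<le> G\<^sup>2 * ln (real m / 2) / (T * (1 + \<delta>))")
    case True
    then have "gam\<^sup>2 * real k = a" using gam_sq unfolding a_def by simp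
    moreover have "c * min a r \<le> min a r" using c0 a0 r0 by (intro mult_left_le_one_le) auto
    ultimately show ?thesis by simp
  next
    case False
    then have g: "gam\<^sup>2 * real k = G\<^sup>2 * real k / (T * (1 + \<delta>)) * ln (real m / 2)"
      using gam_sq by simp
    have "c * min a r \<le> c * r" using c0 by (intro mult_left_mono) auto
    also have "\<dots> \<le> G\<^sup>2 / 5 * r" using c0 r0 by (intro mult_right_mono) auto
    also have "\<dots> = G\<^sup>2 * real k / (T * (1 + \<delta>)) * (ln ((real p - real k - 1) / (real k / 2)) / 5)"
      unfolding r_def by (simp add: field_simps)
    also have "\<dots> \<le> G\<^sup>2 * real k / (T * (1 + \<delta>)) * ln (real m / 2)"
      using log_factor_bounds(2) Td by (intro mult_left_mono) auto
    finally show ?thesis using g by simp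
  qed
  then have "ennreal (c / 8 * min a r) \<le> ennreal (gam\<^sup>2 * real k / 8)" by (intro ennreal_leI) simp
  also have "\<dots> \<le> (SUP f\<in>FTsD p s D. risk n p T Am fhat f)" by (rule risk_ge_gam_sq)
  finally show ?thesis unfolding a_def r_def c_def .
qed

end

theorem theorem1:
  fixes al au :: real
  assumes "al < au"
  shows "\<exists>CL>0. \<forall>(n::nat) (p::nat) (s::nat) (T::real) (D::nat \<Rightarrow> nat \<Rightarrow> real)
            (At::nat \<Rightarrow> nat \<Rightarrow> real) (\<delta>::real) (fhat::(nat \<Rightarrow> nat) \<Rightarrow> nat \<Rightarrow> real).
     1 \<le> n \<longrightarrow> 10 \<le> p \<longrightarrow> 1 \<le> s \<longrightarrow> real s < real p / 3 - 1 \<longrightarrow> 0 < T \<longrightarrow>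
     orthonormal_mat p D \<longrightarrow> first_col_const p D \<longrightarrow>
     (\<forall>i<n. \<forall>j<p. al / sqrt (real n) \<le> At i j \<and> At i j \<le> au / sqrt (real n)) \<longrightarrow>
     0 \<le> \<delta> \<longrightarrow> \<delta> < 1 \<longrightarrow>
     (\<forall>u::nat \<Rightarrow> real. (\<forall>j. p \<le> j \<longrightarrow> u j = 0) \<longrightarrow> card {j. j < p \<and> u j \<noteq> 0} \<le> 2 * s \<longrightarrow>
        (\<Sum>i<n. (matvec p At (matvec p D u) i)\<^sup>2) \<le> (1 + \<delta>) * (\<Sum>j<p. (u j)\<^sup>2)) \<longrightarrow>
     (SUP f\<in>FTsD p s D. risk n p T (sensA al au n At) fhat f)
       \<ge> ennreal (CL * Max ((\<lambda>k. min
             (real k / ((real p)\<^sup>2 * (lambda_loc p (p - 1) (Dbar D) k)\<^sup>2))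
             (real k / ((1 + \<delta>) * T) * ln ((real p - real k - 1) / (real k / 2)))) ` {1..s}))"
proof (intro exI[of _ "min 1 ((au - al)\<^sup>2 / 5) / 8"] conjI allI impI)
  show "0 < min 1 ((au - al)\<^sup>2 / 5) / 8" using assms by simp
  fix n p s :: nat and T \<delta> :: real and D At :: "nat \<Rightarrow> nat \<Rightarrow> real" and fhat :: "(nat \<Rightarrow> nat) \<Rightarrow> nat \<Rightarrow> real"
  assume h: "1 \<le> n" "10 \<le> p" "1 \<le> s" "real s < real p / 3 - 1" "0 < T"
    "orthonormal_mat p D" "first_col_const p D"
    "\<forall>i<n. \<forall>j<p. al / sqrt (real n) \<le> At i j \<and> At i j \<le> au / sqrt (real n)"
    "0 \<le> \<delta>" "\<delta> < 1"
    "\<forall>u::nat \<Rightarrow> real. (\<forall>j. p \<le> j \<longrightarrow> u j = 0) \<longrightarrow> card {j. j < p \<and> u j \<noteq> 0} \<le> 2 * s \<longrightarrow>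
        (\<Sum>i<n. (matvec p At (matvec p D u) i)\<^sup>2) \<le> (1 + \<delta>) * (\<Sum>j<p. (u j)\<^sup>2)"
  let ?F = "\<lambda>k. min (real k / ((real p)\<^sup>2 * (lambda_loc p (p - 1) (Dbar D) k)\<^sup>2))
                    (real k / ((1 + \<delta>) * T) * ln ((real p - real k - 1) / (real k / 2)))"
  have "Max (?F ` {1..s}) \<in> ?F ` {1..s}" using h(3) by (intro Max_in) auto
  then obtain k where k: "k \<in> {1..s}" and kmax: "Max (?F ` {1..s}) = ?F k"
    unfolding image_iff by blast
  interpret lower_bound_setup al au n p s k T \<delta> D At
    by unfold_locales (use assms h k in auto)
  show "ennreal (min 1 ((au - al)\<^sup>2 / 5) / 8 * Max (?F ` {1..s}))
        \<le> (SUP f\<in>FTsD p s D. risk n p T (sensA al au n At) fhat f)"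
    using minimax_bound_fixed_k[of fhat] unfolding kmax G_def Am_def lam_def .
qed

end
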